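(* Consider a $d$-regular simple graph ($d\ge3$) on $B$ bonds, with arbitrary bond lengths, quantised with unitary vertex scattering matrices that prohibit back-scattering (all diagonal entries of every $\sigma_v$ are zero). Let $T$ be a positive integer, $\kappa>0$, and $f\in\mathbb{C}^{2B}$ with $|f_b|\le\kappa$ for $b=1,\dots,2B$. Then for all $t=1,2,\dots,T$, $$\big|\langle f,\tilde M^{(t)}f\rangle_{\mathbb{C}^{2B}}-\langle f,M^tf\rangle_{\mathbb{C}^{2B}}\big|\le\frac{2\kappa^2}{(d-2)(d-1)}(d-1)^t\,|\mathcal{C}_{B,2T}|.$$
   Context: A graph is simple if it has no loops or multiple edges. Each bond of length $L_b>0$ gives two directed bonds of equal length; $o(b),t(b)$ denote origin and terminus of directed bond $b$. Each vertex $v$ carries a unitary $d\times d$ matrix $\sigma_v$ indexed by the bonds at $v$; the bond scattering matrix $S$ ($2B\times2B$) has $S_{bc}=0$ unless $t(b)=o(c)$, and otherwise equals the entry of $\sigma_{t(b)}$ in the row of the bond underlying $c$ and column of the bond underlying $b$. $U(k)_{bc}=e^{ikL_b}S_{bc}$. $M$ is the $2B\times2B$ matrix $M_{bc}=|S_{bc}|^2$. $\tilde M^{(t)}_{bc}=\lim_{K\to\infty}\frac1K\int_0^K|(U(k)^t)_{bc}|^2\,dk$. $\langle x,y\rangle=\sum_i\bar x_iy_i$. A cycle is a closed path without back-tracking; $\mathcal{C}_{B,t}$ is the set of bonds lying on a cycle of length at most $t$. *)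

theory Defs
  imports "HOL-Analysis.Analysis"
begin

text \<open>A simple graph: finite vertex set V, symmetric irreflexive adjacency E on V.
  Bonds are the undirected edges {u,v}; directed bonds are pairs (u,v) with E u v,
  origin u, terminus v.\<close>

definition simple_graph :: "'v set \<Rightarrow> ('v \<Rightarrow> 'v \<Rightarrow> bool) \<Rightarrow> bool" where
  "simple_graph V E \<longleftrightarrow> finite V \<and> (\<forall>u w. E u w \<longrightarrow> u \<in> V \<and> w \<in> V)
     \<and> (\<forall>u w. E u w \<longrightarrow> E w u) \<and> (\<forall>u. \<not> E u u)"

definition nbrs :: "'v set \<Rightarrow> ('v \<Rightarrow> 'v \<Rightarrow> bool) \<Rightarrow> 'v \<Rightarrow> 'v set" where
  "nbrs V E v = {w \<in> V. E v w}"

definition regular :: "'v set \<Rightarrow> ('v \<Rightarrow> 'v \<Rightarrow> bool) \<Rightarrow> nat \<Rightarrow> bool" where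
  "regular V E d \<longleftrightarrow> (\<forall>v\<in>V. card (nbrs V E v) = d)"

definition dbonds :: "'v set \<Rightarrow> ('v \<Rightarrow> 'v \<Rightarrow> bool) \<Rightarrow> ('v \<times> 'v) set" where
  "dbonds V E = {(u, w). u \<in> V \<and> w \<in> V \<and> E u w}"

definition bond_lengths :: "'v set \<Rightarrow> ('v \<Rightarrow> 'v \<Rightarrow> bool) \<Rightarrow> ('v \<times> 'v \<Rightarrow> real) \<Rightarrow> bool" where
  "bond_lengths V E L \<longleftrightarrow> (\<forall>(u, w) \<in> dbonds V E. L (u, w) > 0 \<and> L (w, u) = L (u, w))"

definition unitary_on :: "'v set \<Rightarrow> ('v \<Rightarrow> 'v \<Rightarrow> complex) \<Rightarrow> bool" where
  "unitary_on N U \<longleftrightarrow>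
     (\<forall>a\<in>N. \<forall>b\<in>N. (\<Sum>w\<in>N. U a w * cnj (U b w)) = (if a = b then 1 else 0))"

text \<open>The vertex matrix sigma v is indexed by the bonds at v, which (simple graph)
  correspond to the neighbours of v: sigma v w u is the entry in the row of
  bond {v,w} and column of bond {v,u}.\<close>
definition Smat :: "('v \<Rightarrow> 'v \<Rightarrow> 'v \<Rightarrow> complex) \<Rightarrow> 'v \<times> 'v \<Rightarrow> 'v \<times> 'v \<Rightarrow> complex" where
  "Smat \<sigma> b c = (if snd b = fst c then \<sigma> (snd b) (snd c) (fst b) else 0)"

definition Umat :: "('v \<times> 'v \<Rightarrow> real) \<Rightarrow> ('v \<Rightarrow> 'v \<Rightarrow> 'v \<Rightarrow> complex) \<Rightarrow> real
    \<Rightarrow> 'v \<times> 'v \<Rightarrow> 'v \<times> 'v \<Rightarrow> complex" where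
  "Umat L \<sigma> k b c = exp (\<i> * complex_of_real (k * L b)) * Smat \<sigma> b c"

definition Mmat :: "('v \<Rightarrow> 'v \<Rightarrow> 'v \<Rightarrow> complex) \<Rightarrow> 'v \<times> 'v \<Rightarrow> 'v \<times> 'v \<Rightarrow> real" where
  "Mmat \<sigma> b c = (cmod (Smat \<sigma> b c))\<^sup>2"

primrec mat_pow :: "'a set \<Rightarrow> ('a \<Rightarrow> 'a \<Rightarrow> 'b::semiring_1) \<Rightarrow> nat \<Rightarrow> 'a \<Rightarrow> 'a \<Rightarrow> 'b" where
  "mat_pow D A 0 = (\<lambda>b c. if b = c then 1 else 0)"
| "mat_pow D A (Suc n) = (\<lambda>b c. \<Sum>x\<in>D. mat_pow D A n b x * A x c)"

definition Mtilde :: "('v \<times> 'v) set \<Rightarrow> ('v \<times> 'v \<Rightarrow> real) \<Rightarrow> ('v \<Rightarrow> 'v \<Rightarrow> 'v \<Rightarrow> complex)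
    \<Rightarrow> nat \<Rightarrow> 'v \<times> 'v \<Rightarrow> 'v \<times> 'v \<Rightarrow> real" where
  "Mtilde D L \<sigma> t b c =
     Lim at_top (\<lambda>K. (1 / K) * integral {0..K}
        (\<lambda>k. (cmod (mat_pow D (Umat L \<sigma> k) t b c))\<^sup>2))"

definition bond_inner :: "'a set \<Rightarrow> ('a \<Rightarrow> complex) \<Rightarrow> ('a \<Rightarrow> 'a \<Rightarrow> complex) \<Rightarrow> ('a \<Rightarrow> complex) \<Rightarrow> complex" where
  "bond_inner D x A y = (\<Sum>b\<in>D. cnj (x b) * (\<Sum>c\<in>D. A b c * y c))"

text \<open>A cycle of length l: closed path p 0, ..., p l = p 0 along bonds, without
  back-tracking (also across the closing point, read cyclically).\<close>
definition is_cycle :: "'v set \<Rightarrow> ('v \<Rightarrow> 'v \<Rightarrow> bool) \<Rightarrow> nat \<Rightarrow> (nat \<Rightarrow> 'v) \<Rightarrow> bool" where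
  "is_cycle V E l p \<longleftrightarrow> l \<ge> 1 \<and> p l = p 0 \<and> (\<forall>i\<le>l. p i \<in> V)
     \<and> (\<forall>i<l. E (p i) (p (Suc i)))
     \<and> (\<forall>i. p ((i + 2) mod l) \<noteq> p (i mod l))"

definition cycle_bonds :: "'v set \<Rightarrow> ('v \<Rightarrow> 'v \<Rightarrow> bool) \<Rightarrow> nat \<Rightarrow> 'v set set" where
  "cycle_bonds V E t = {{u, w} | u w. E u w \<and>
     (\<exists>l p. l \<le> t \<and> is_cycle V E l p \<and> (\<exists>i<l. {p i, p (Suc i)} = {u, w}))}"

end

theory Submission
  imports Defs
begin

text \<open>Expanding (U(k)^t)_bc over the walks b -> c with t steps, each walk contributes its
  amplitude times exp(ik * metric length); the time average over k keeps exactly the pairs of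
  walks of equal length. Hence the diagonal pairs give (M^t)_bc, and the two matrices agree in
  column c unless two distinct walks of nonzero amplitude end at c. Without back-scattering
  such walks are non-backtracking, and two distinct non-backtracking walks with common ends
  close, between their last divergence and their next meeting, a cycle of length at most 2t
  through the bonds where they last differ. So c is reached in i <= t - 2 non-backtracking
  steps from two distinct directed bonds on short cycles, while each directed bond reaches
  at most (d-1)^i bonds in i steps. Both matrices are column stochastic, so each such column
  contributes at most 2 kappa^2, and summing the geometric series gives the bound.\<close>

section \<open>Time averages of trigonometric sums\<close>

definition cis_integral :: "real \<Rightarrow> real \<Rightarrow> complex" where
  "cis_integral w K = (if w = 0 then of_real K else (cis (K * w) - 1) / (\<i> * of_real w))"

lemma has_integral_cis:
  assumes "0 \<le> K"
  shows "((\<lambda>k. cis (k * w)) has_integral cis_integral w K) {0..K}"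
proof (cases "w = 0")
  case True
  then show ?thesis
    using has_integral_const_real[of "1::complex" 0 K] assms
    by (simp add: cis_integral_def scaleR_conv_of_real)
next
  case False
  have "((\<lambda>k. cis (k * w) / (\<i> * of_real w)) has_vector_derivative cis (x * w)) (at x within {0..K})"
    for x
    using False unfolding cis_conv_exp
    by (auto intro!: derivative_eq_intros has_vector_derivative_real_field simp: field_simps)
  from fundamental_theorem_of_calculus[OF assms this]
  show ?thesis
    using False by (simp add: cis_integral_def diff_divide_distrib)
qed

lemma cis_integral_average_tendsto:
  "((\<lambda>K. cis_integral w K / of_real K) \<longlongrightarrow> (if w = 0 then 1 else 0)) at_top"
proof (cases "w = 0")
  case True
  have "\<forall>\<^sub>F K in at_top. cis_integral w K / of_real K = 1"
    using eventually_gt_at_top[of "0::real"] by eventually_elim (simp add: cis_integral_def True)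
  then show ?thesis
    using True by (simp add: tendsto_eventually)
next
  case False
  have "\<forall>\<^sub>F K in at_top. norm (cis_integral w K / of_real K) \<le> 2 / \<bar>w\<bar> * inverse K"
    using eventually_gt_at_top[of "0::real"]
  proof eventually_elim
    case (elim K)
    have "norm (cis (K * w) - 1) \<le> 2"
      using norm_triangle_ineq4[of "cis (K * w)" 1] by simp
    moreover have "norm (cis_integral w K / of_real K) = norm (cis (K * w) - 1) / (\<bar>w\<bar> * K)"
      using False elim by (simp add: cis_integral_def norm_divide norm_mult)
    ultimately show ?case
      using elim False by (simp add: divide_right_mono field_simps)
  qed
  moreover have "((\<lambda>K::real. 2 / \<bar>w\<bar> * inverse K) \<longlongrightarrow> 0) at_top"
    by (intro tendsto_mult_right_zero tendsto_inverse_0_at_top filterlim_ident)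
  ultimately show ?thesis
    using False Lim_null_comparison by auto
qed

lemma norm_sum_cis_squared:
  "complex_of_real ((cmod (\<Sum>p\<in>I. \<alpha> p * cis (k * \<omega> p)))\<^sup>2)
     = (\<Sum>p\<in>I. \<Sum>q\<in>I. \<alpha> p * cnj (\<alpha> q) * cis (k * (\<omega> p - \<omega> q)))"
proof -
  have "complex_of_real ((cmod (\<Sum>p\<in>I. \<alpha> p * cis (k * \<omega> p)))\<^sup>2)
      = (\<Sum>p\<in>I. \<alpha> p * cis (k * \<omega> p)) * (\<Sum>q\<in>I. cnj (\<alpha> q) * cis (- (k * \<omega> q)))"
    unfolding complex_norm_square by (simp add: cis_cnj)
  also have "\<dots> = (\<Sum>p\<in>I. \<Sum>q\<in>I. \<alpha> p * cnj (\<alpha> q) * cis (k * (\<omega> p - \<omega> q)))"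
    unfolding sum_product
    by (intro sum.cong refl) (simp add: mult_ac cis_mult right_diff_distrib)
  finally show ?thesis .
qed

lemma has_integral_norm_sum_cis_squared:
  assumes "finite I" "0 \<le> K"
  shows "((\<lambda>k. (cmod (\<Sum>p\<in>I. \<alpha> p * cis (k * \<omega> p)))\<^sup>2) has_integral
           Re (\<Sum>p\<in>I. \<Sum>q\<in>I. \<alpha> p * cnj (\<alpha> q) * cis_integral (\<omega> p - \<omega> q) K)) {0..K}"
proof -
  have "((\<lambda>k. complex_of_real ((cmod (\<Sum>p\<in>I. \<alpha> p * cis (k * \<omega> p)))\<^sup>2)) has_integral
           (\<Sum>p\<in>I. \<Sum>q\<in>I. \<alpha> p * cnj (\<alpha> q) * cis_integral (\<omega> p - \<omega> q) K)) {0..K}"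
    unfolding norm_sum_cis_squared
    using assms by (intro has_integral_sum has_integral_mult_right has_integral_cis) auto
  from has_integral_linear[OF this bounded_linear_Re] show ?thesis
    by (simp add: o_def del: of_real_power)
qed

lemma time_average_norm_sum_cis_squared:
  assumes "finite I"
  shows "((\<lambda>K. (1/K) * integral {0..K} (\<lambda>k. (cmod (\<Sum>p\<in>I. \<alpha> p * cis (k * \<omega> p)))\<^sup>2))
     \<longlongrightarrow> Re (\<Sum>p\<in>I. \<Sum>q\<in>I. if \<omega> p = \<omega> q then \<alpha> p * cnj (\<alpha> q) else 0)) at_top"
proof -
  have "((\<lambda>K. \<Sum>p\<in>I. \<Sum>q\<in>I. \<alpha> p * cnj (\<alpha> q) * (cis_integral (\<omega> p - \<omega> q) K / of_real K))
     \<longlongrightarrow> (\<Sum>p\<in>I. \<Sum>q\<in>I. \<alpha> p * cnj (\<alpha> q) * (if \<omega> p - \<omega> q = 0 then 1 else 0))) at_top"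
    by (intro tendsto_sum tendsto_mult_left cis_integral_average_tendsto)
  also have "(\<Sum>p\<in>I. \<Sum>q\<in>I. \<alpha> p * cnj (\<alpha> q) * (if \<omega> p - \<omega> q = 0 then 1 else 0))
      = (\<Sum>p\<in>I. \<Sum>q\<in>I. if \<omega> p = \<omega> q then \<alpha> p * cnj (\<alpha> q) else 0)"
    by (intro sum.cong refl) auto
  finally have lim: "((\<lambda>K. Re (\<Sum>p\<in>I. \<Sum>q\<in>I. \<alpha> p * cnj (\<alpha> q) * (cis_integral (\<omega> p - \<omega> q) K / of_real K)))
     \<longlongrightarrow> Re (\<Sum>p\<in>I. \<Sum>q\<in>I. if \<omega> p = \<omega> q then \<alpha> p * cnj (\<alpha> q) else 0)) at_top"
    by (rule tendsto_Re)
  have "\<forall>\<^sub>F K in at_top. Re (\<Sum>p\<in>I. \<Sum>q\<in>I. \<alpha> p * cnj (\<alpha> q) * (cis_integral (\<omega> p - \<omega> q) K / of_real K))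
     = (1/K) * integral {0..K} (\<lambda>k. (cmod (\<Sum>p\<in>I. \<alpha> p * cis (k * \<omega> p)))\<^sup>2)"
    using eventually_gt_at_top[of "0::real"]
  proof eventually_elim
    case (elim K)
    have "integral {0..K} (\<lambda>k. (cmod (\<Sum>p\<in>I. \<alpha> p * cis (k * \<omega> p)))\<^sup>2)
       = Re (\<Sum>p\<in>I. \<Sum>q\<in>I. \<alpha> p * cnj (\<alpha> q) * cis_integral (\<omega> p - \<omega> q) K)"
      using has_integral_norm_sum_cis_squared[OF assms, of K] elim by (simp add: integral_unique)
    moreover have "(\<Sum>p\<in>I. \<Sum>q\<in>I. \<alpha> p * cnj (\<alpha> q) * (cis_integral (\<omega> p - \<omega> q) K / of_real K))
       = (\<Sum>p\<in>I. \<Sum>q\<in>I. \<alpha> p * cnj (\<alpha> q) * cis_integral (\<omega> p - \<omega> q) K) / of_real K"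
      by (simp add: sum_divide_distrib)
    ultimately show ?case
      by (simp add: Re_divide_of_real)
  qed
  from tendsto_cong[THEN iffD1, OF this lim] show ?thesis .
qed

section \<open>Matrix powers as sums over walks\<close>

definition walks :: "'a set \<Rightarrow> nat \<Rightarrow> 'a \<Rightarrow> 'a \<Rightarrow> (nat \<Rightarrow> 'a) set" where
  "walks D n b c = {p \<in> {..n} \<rightarrow>\<^sub>E D. p 0 = b \<and> p n = c}"

lemma finite_walks: "finite D \<Longrightarrow> finite (walks D n b c)"
  unfolding walks_def by (rule finite_subset[of _ "{..n} \<rightarrow>\<^sub>E D"]) (auto intro: finite_PiE)

lemma walks_0: "b \<in> D \<Longrightarrow> walks D 0 b c = (if b = c then {(\<lambda>i. if i = 0 then b else undefined)} else {})"
  unfolding walks_def by (auto simp: PiE_def extensional_def fun_eq_iff)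

lemma walks_in_carrier: "p \<in> walks D n b c \<Longrightarrow> i \<le> n \<Longrightarrow> p i \<in> D"
  unfolding walks_def by auto

lemma mat_pow_eq_sum_walks:
  fixes A :: "'a \<Rightarrow> 'a \<Rightarrow> 'b::comm_semiring_1"
  assumes "finite D" "b \<in> D" "c \<in> D"
  shows "mat_pow D A n b c = (\<Sum>p\<in>walks D n b c. \<Prod>i<n. A (p i) (p (Suc i)))"
  using assms(3)
proof (induction n arbitrary: c)
  case 0
  then show ?case using assms by (simp add: walks_0)
next
  case (Suc n)
  have "mat_pow D A (Suc n) b c = (\<Sum>x\<in>D. (\<Sum>p\<in>walks D n b x. \<Prod>i<n. A (p i) (p (Suc i))) * A x c)"
    using Suc by simp
  also have "\<dots> = (\<Sum>(x, p)\<in>Sigma D (walks D n b). (\<Prod>i<n. A (p i) (p (Suc i))) * A x c)"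
    unfolding sum_distrib_right by (rule sum.Sigma) (auto simp: assms finite_walks)
  also have "\<dots> = (\<Sum>p\<in>walks D (Suc n) b c. \<Prod>i<Suc n. A (p i) (p (Suc i)))"
  proof (rule sum.reindex_bij_witness[where i = "\<lambda>p. (p n, restrict p {..n})" and j = "\<lambda>(x, p). p(Suc n := c)"])
    fix a assume a: "a \<in> Sigma D (walks D n b)"
    then show "(\<lambda>p. (p n, restrict p {..n})) ((\<lambda>(x, p). p(Suc n := c)) a) = a"
      by (auto simp: walks_def PiE_def extensional_def fun_eq_iff)
    show "(\<lambda>(x, p). p(Suc n := c)) a \<in> walks D (Suc n) b c"
      using a Suc.prems by (auto simp: walks_def PiE_def extensional_def Pi_def le_Suc_eq)
    show "(\<Prod>i<Suc n. A (((\<lambda>(x, p). p(Suc n := c)) a) i) (((\<lambda>(x, p). p(Suc n := c)) a) (Suc i))) =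
       (case a of (x, p) \<Rightarrow> (\<Prod>i<n. A (p i) (p (Suc i))) * A x c)"
      using a by (auto simp: walks_def)
  next
    fix p assume p: "p \<in> walks D (Suc n) b c"
    then show "(\<lambda>(x, p). p(Suc n := c)) (p n, restrict p {..n}) = p"
      by (auto simp: walks_def PiE_def extensional_def fun_eq_iff)
    show "(p n, restrict p {..n}) \<in> Sigma D (walks D n b)"
      using p by (auto simp: walks_def PiE_def extensional_def)
  qed
  finally show ?case .
qed

lemma mat_pow_nonneg:
  fixes A :: "'a \<Rightarrow> 'a \<Rightarrow> 'b::linordered_semidom"
  assumes "\<And>b c. 0 \<le> A b c"
  shows "0 \<le> mat_pow D A n b c"
  using assms by (induction n arbitrary: c) (auto intro!: sum_nonneg)

lemma mat_pow_column_sum_one: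
  fixes A :: "'a \<Rightarrow> 'a \<Rightarrow> 'b::comm_semiring_1"
  assumes "finite D" and col: "\<And>c. c \<in> D \<Longrightarrow> (\<Sum>b\<in>D. A b c) = 1" and "c \<in> D"
  shows "(\<Sum>b\<in>D. mat_pow D A n b c) = 1"
  using \<open>c \<in> D\<close>
proof (induction n arbitrary: c)
  case 0
  then show ?case using \<open>finite D\<close> by simp
next
  case (Suc n)
  have "(\<Sum>b\<in>D. mat_pow D A (Suc n) b c) = (\<Sum>x\<in>D. (\<Sum>b\<in>D. mat_pow D A n b x) * A x c)"
    by (simp add: sum_distrib_right) (rule sum.swap)
  also have "\<dots> = 1"
    using Suc by (simp add: col)
  finally show ?case .
qed

definition orthonormal_columns :: "'a set \<Rightarrow> ('a \<Rightarrow> 'a \<Rightarrow> complex) \<Rightarrow> bool" where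
  "orthonormal_columns D A \<longleftrightarrow>
     (\<forall>c\<in>D. \<forall>c'\<in>D. (\<Sum>x\<in>D. cnj (A x c) * A x c') = (if c = c' then 1 else 0))"

lemma orthonormal_columns_sum_norm_square:
  assumes "orthonormal_columns D A" "c \<in> D"
  shows "(\<Sum>b\<in>D. (cmod (A b c))\<^sup>2) = 1"
proof -
  have "complex_of_real (\<Sum>b\<in>D. (cmod (A b c))\<^sup>2) = (\<Sum>b\<in>D. cnj (A b c) * A b c)"
    unfolding of_real_sum complex_norm_square by (simp add: mult.commute)
  also have "\<dots> = 1"
    using assms by (simp add: orthonormal_columns_def)
  finally show ?thesis
    by (metis of_real_eq_1_iff)
qed

lemma orthonormal_columns_mat_pow:
  assumes "finite D" "orthonormal_columns D A"
  shows "orthonormal_columns D (mat_pow D A n)"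
proof (induction n)
  case 0
  have "(\<Sum>x\<in>D. cnj (if x = c then 1 else 0) * (if x = c' then 1 else 0)) = (if c = c' then 1 else (0::complex))"
    if "c \<in> D" for c c'
    using that \<open>finite D\<close> by (simp add: if_distrib[of cnj] if_distrib[of "\<lambda>z. z * _"] cong: if_cong)
  then show ?case
    by (simp add: orthonormal_columns_def)
next
  case (Suc n)
  let ?P = "mat_pow D A n"
  have "(\<Sum>b\<in>D. cnj (\<Sum>x\<in>D. ?P b x * A x c) * (\<Sum>y\<in>D. ?P b y * A y c'))
      = (if c = c' then 1 else 0)" if "c \<in> D" "c' \<in> D" for c c'
  proof -
    have "(\<Sum>b\<in>D. cnj (\<Sum>x\<in>D. ?P b x * A x c) * (\<Sum>y\<in>D. ?P b y * A y c'))
        = (\<Sum>b\<in>D. \<Sum>x\<in>D. \<Sum>y\<in>D. cnj (A x c) * A y c' * (cnj (?P b x) * ?P b y))"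
      unfolding cnj_sum sum_product by (intro sum.cong refl) (simp add: mult_ac)
    also have "\<dots> = (\<Sum>x\<in>D. \<Sum>y\<in>D. cnj (A x c) * A y c' * (\<Sum>b\<in>D. cnj (?P b x) * ?P b y))"
      unfolding sum_distrib_left by (subst sum.swap) (intro sum.cong refl sum.swap)
    also have "\<dots> = (\<Sum>x\<in>D. cnj (A x c) * A x c')"
      using Suc \<open>finite D\<close> by (simp add: orthonormal_columns_def if_distrib[of "\<lambda>z. _ * z"] cong: if_cong)
    also have "\<dots> = (if c = c' then 1 else 0)"
      using assms(2) that by (simp add: orthonormal_columns_def)
    finally show ?thesis .
  qed
  then show ?case
    by (simp add: orthonormal_columns_def)
qed

section \<open>The bond scattering matrix\<close>

lemma finite_dbonds: "simple_graph V E \<Longrightarrow> finite (dbonds V E)"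
  unfolding simple_graph_def dbonds_def by (rule finite_subset[of _ "V \<times> V"]) auto

lemma mem_dbonds: "x \<in> dbonds V E \<longleftrightarrow> fst x \<in> V \<and> snd x \<in> V \<and> E (fst x) (snd x)"
  by (cases x) (auto simp: dbonds_def)

lemma dbonds_into_vertex:
  "simple_graph V E \<Longrightarrow> v \<in> V \<Longrightarrow> {x \<in> dbonds V E. snd x = v} = (\<lambda>u. (u, v)) ` nbrs V E v"
  by (auto simp: simple_graph_def dbonds_def nbrs_def image_def)

lemma orthonormal_columns_Smat:
  assumes G: "simple_graph V E" and U: "\<forall>v\<in>V. unitary_on (nbrs V E v) (\<sigma> v)"
  shows "orthonormal_columns (dbonds V E) (Smat \<sigma>)"
  unfolding orthonormal_columns_def
proof (intro ballI)
  fix c c' assume c: "c \<in> dbonds V E" and c': "c' \<in> dbonds V E"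
  obtain v w v' w' where cv: "c = (v, w)" and cv': "c' = (v', w')"
    by (cases c, cases c')
  show "(\<Sum>x\<in>dbonds V E. cnj (Smat \<sigma> x c) * Smat \<sigma> x c') = (if c = c' then 1 else 0)"
  proof (cases "v = v'")
    case False
    then show ?thesis by (auto simp: Smat_def cv cv' intro!: sum.neutral)
  next
    case True
    have vV: "v \<in> V" and ww: "w \<in> nbrs V E v" "w' \<in> nbrs V E v"
      using c c' True by (auto simp: cv cv' dbonds_def nbrs_def)
    have "(\<Sum>x\<in>dbonds V E. cnj (Smat \<sigma> x c) * Smat \<sigma> x c')
        = (\<Sum>x\<in>{x \<in> dbonds V E. snd x = v}. cnj (\<sigma> v w (fst x)) * \<sigma> v w' (fst x))"
      by (simp add: sum.inter_filter finite_dbonds[OF G] Smat_def cv cv' True if_distrib cong: if_cong)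
    also have "\<dots> = (\<Sum>u\<in>nbrs V E v. cnj (\<sigma> v w u) * \<sigma> v w' u)"
      unfolding dbonds_into_vertex[OF G vV] by (subst sum.reindex) (auto simp: inj_on_def)
    also have "\<dots> = cnj (\<Sum>u\<in>nbrs V E v. \<sigma> v w u * cnj (\<sigma> v w' u))"
      by (simp add: mult.commute)
    also have "\<dots> = (if w = w' then 1 else 0)"
      using U vV ww unfolding unitary_on_def by auto
    finally show ?thesis by (simp add: cv cv' True)
  qed
qed

lemma Umat_eq_cis: "Umat L \<sigma> k b c = cis (k * L b) * Smat \<sigma> b c"
  by (simp add: Umat_def cis_conv_exp)

lemma orthonormal_columns_Umat:
  assumes "orthonormal_columns D (Smat \<sigma>)"
  shows "orthonormal_columns D (Umat L \<sigma> k)"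
proof -
  have "cnj (cis a) * cis a = 1" for a
    by (simp add: cis_cnj cis_mult)
  then have "cnj (Umat L \<sigma> k x c) * Umat L \<sigma> k x c' = cnj (Smat \<sigma> x c) * Smat \<sigma> x c'" for x c c'
    by (simp add: Umat_eq_cis)
  then show ?thesis
    using assms by (simp add: orthonormal_columns_def)
qed

definition walk_amplitude :: "('v \<Rightarrow> 'v \<Rightarrow> 'v \<Rightarrow> complex) \<Rightarrow> nat \<Rightarrow> (nat \<Rightarrow> 'v \<times> 'v) \<Rightarrow> complex" where
  "walk_amplitude \<sigma> n p = (\<Prod>i<n. Smat \<sigma> (p i) (p (Suc i)))"

text \<open>The phase of a step of U is attached to the bond it leaves (the row index), so the
  final bond of a walk does not count towards its length.\<close>

definition walk_length :: "('v \<times> 'v \<Rightarrow> real) \<Rightarrow> nat \<Rightarrow> (nat \<Rightarrow> 'v \<times> 'v) \<Rightarrow> real" where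
  "walk_length L n p = (\<Sum>i<n. L (p i))"

lemma mat_pow_Umat_eq_sum_walks:
  assumes "finite D" "b \<in> D" "c \<in> D"
  shows "mat_pow D (Umat L \<sigma> k) n b c
       = (\<Sum>p\<in>walks D n b c. walk_amplitude \<sigma> n p * cis (k * walk_length L n p))"
proof -
  have prod_eq: "(\<Prod>i<n. Umat L \<sigma> k (p i) (p (Suc i))) = walk_amplitude \<sigma> n p * cis (k * walk_length L n p)"
    for p :: "nat \<Rightarrow> _"
  proof (induction n)
    case (Suc n)
    then show ?case
      by (simp add: walk_amplitude_def walk_length_def Umat_eq_cis distrib_left cis_mult[symmetric] mult_ac)
  qed (simp add: walk_amplitude_def walk_length_def)
  show ?thesis
    by (simp add: mat_pow_eq_sum_walks[OF assms] prod_eq)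
qed

lemma mat_pow_Mmat_eq_sum_walks:
  assumes "finite D" "b \<in> D" "c \<in> D"
  shows "mat_pow D (Mmat \<sigma>) n b c = (\<Sum>p\<in>walks D n b c. (cmod (walk_amplitude \<sigma> n p))\<^sup>2)"
  unfolding mat_pow_eq_sum_walks[OF assms]
  by (simp add: Mmat_def walk_amplitude_def prod_norm[symmetric] prod_power_distrib)

lemma Mtilde_tendsto:
  assumes "finite D" "b \<in> D" "c \<in> D"
  shows "((\<lambda>K. (1/K) * integral {0..K} (\<lambda>k. (cmod (mat_pow D (Umat L \<sigma> k) n b c))\<^sup>2))
    \<longlongrightarrow> Re (\<Sum>p\<in>walks D n b c. \<Sum>q\<in>walks D n b c.
           if walk_length L n p = walk_length L n q
           then walk_amplitude \<sigma> n p * cnj (walk_amplitude \<sigma> n q) else 0)) at_top"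
  unfolding mat_pow_Umat_eq_sum_walks[OF assms]
  by (rule time_average_norm_sum_cis_squared[OF finite_walks[OF assms(1)]])

lemma Mtilde_eq_sum_equal_length_walks:
  assumes "finite D" "b \<in> D" "c \<in> D"
  shows "Mtilde D L \<sigma> n b c
    = Re (\<Sum>p\<in>walks D n b c. \<Sum>q\<in>walks D n b c.
           if walk_length L n p = walk_length L n q
           then walk_amplitude \<sigma> n p * cnj (walk_amplitude \<sigma> n q) else 0)"
  unfolding Mtilde_def by (rule tendsto_Lim[OF _ Mtilde_tendsto[OF assms]]) simp

lemma time_average_tendsto_Mtilde:
  assumes "finite D" "b \<in> D" "c \<in> D"
  shows "((\<lambda>K. (1/K) * integral {0..K} (\<lambda>k. (cmod (mat_pow D (Umat L \<sigma> k) n b c))\<^sup>2))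
    \<longlongrightarrow> Mtilde D L \<sigma> n b c) at_top"
  unfolding Mtilde_eq_sum_equal_length_walks[OF assms] by (rule Mtilde_tendsto[OF assms])

lemma integrable_norm_mat_pow_Umat_squared:
  assumes "finite D" "b \<in> D" "c \<in> D" "0 \<le> K"
  shows "(\<lambda>k. (cmod (mat_pow D (Umat L \<sigma> k) n b c))\<^sup>2) integrable_on {0..K}"
  unfolding mat_pow_Umat_eq_sum_walks[OF assms(1-3)]
  using has_integral_norm_sum_cis_squared[OF finite_walks[OF assms(1)] assms(4)] by blast

lemma Mtilde_nonneg:
  assumes "finite D" "b \<in> D" "c \<in> D"
  shows "0 \<le> Mtilde D L \<sigma> n b c"
proof -
  have "\<forall>\<^sub>F K in at_top. 0 \<le> (1/K) * integral {0..K} (\<lambda>k. (cmod (mat_pow D (Umat L \<sigma> k) n b c))\<^sup>2)"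
    using eventually_gt_at_top[of "0::real"]
    by eventually_elim
      (auto intro!: divide_nonneg_pos integral_nonneg integrable_norm_mat_pow_Umat_squared[OF assms])
  from tendsto_lowerbound[OF time_average_tendsto_Mtilde[OF assms] this] show ?thesis
    by simp
qed

lemma Mtilde_column_sum:
  assumes "finite D" "orthonormal_columns D (Smat \<sigma>)" "c \<in> D"
  shows "(\<Sum>b\<in>D. Mtilde D L \<sigma> n b c) = 1"
proof -
  define g where "g b k = (cmod (mat_pow D (Umat L \<sigma> k) n b c))\<^sup>2" for b k
  have lim: "((\<lambda>K. \<Sum>b\<in>D. (1/K) * integral {0..K} (g b)) \<longlongrightarrow> (\<Sum>b\<in>D. Mtilde D L \<sigma> n b c)) at_top"
    unfolding g_def using assms by (intro tendsto_sum time_average_tendsto_Mtilde)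
  have one: "(\<Sum>b\<in>D. g b k) = 1" for k
    unfolding g_def
    using assms by (intro orthonormal_columns_sum_norm_square orthonormal_columns_mat_pow
        orthonormal_columns_Umat)
  have "\<forall>\<^sub>F K in at_top. (\<Sum>b\<in>D. (1/K) * integral {0..K} (g b)) = 1"
    using eventually_gt_at_top[of "0::real"]
  proof eventually_elim
    case (elim K)
    have "(\<Sum>b\<in>D. integral {0..K} (g b)) = integral {0..K} (\<lambda>k. \<Sum>b\<in>D. g b k)"
      unfolding g_def using assms elim
      by (intro integral_sum[symmetric] integrable_norm_mat_pow_Umat_squared) auto
    also have "\<dots> = K"
      using elim by (simp add: one)
    finally show ?case
      using elim by (simp add: sum_divide_distrib[symmetric])
  qed
  then have "((\<lambda>K. \<Sum>b\<in>D. (1/K) * integral {0..K} (g b)) \<longlongrightarrow> 1) at_top"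
    by (simp add: tendsto_eventually)
  from tendsto_unique[OF _ lim this] show ?thesis
    by simp
qed

lemma Mtilde_eq_mat_pow_Mmat_if_unique_walk:
  assumes "finite D" "b \<in> D" "c \<in> D"
    and unique: "\<And>p q. p \<in> walks D n b c \<Longrightarrow> q \<in> walks D n b c \<Longrightarrow> p \<noteq> q
                   \<Longrightarrow> walk_amplitude \<sigma> n p = 0 \<or> walk_amplitude \<sigma> n q = 0"
  shows "Mtilde D L \<sigma> n b c = mat_pow D (Mmat \<sigma>) n b c"
proof -
  have "(\<Sum>q\<in>walks D n b c. if walk_length L n p = walk_length L n q
           then walk_amplitude \<sigma> n p * cnj (walk_amplitude \<sigma> n q) else 0)
      = complex_of_real ((cmod (walk_amplitude \<sigma> n p))\<^sup>2)" if p: "p \<in> walks D n b c" for p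
  proof -
    have "(\<Sum>q\<in>walks D n b c. if walk_length L n p = walk_length L n q
           then walk_amplitude \<sigma> n p * cnj (walk_amplitude \<sigma> n q) else 0)
        = (\<Sum>q\<in>walks D n b c. if q = p then walk_amplitude \<sigma> n p * cnj (walk_amplitude \<sigma> n p) else 0)"
      using unique p by (intro sum.cong refl) auto
    then show ?thesis
      using p finite_walks[OF assms(1)] by (simp add: complex_norm_square del: of_real_power)
  qed
  then show ?thesis
    by (simp add: Mtilde_eq_sum_equal_length_walks[OF assms(1-3)]
        mat_pow_Mmat_eq_sum_walks[OF assms(1-3)] del: of_real_power)
qed

section \<open>Non-backtracking walks and short cycles\<close>

definition nonbacktracking :: "nat \<Rightarrow> (nat \<Rightarrow> 'v \<times> 'v) \<Rightarrow> bool" where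
  "nonbacktracking n p \<longleftrightarrow> (\<forall>i<n. snd (p i) = fst (p (Suc i)) \<and> fst (p i) \<noteq> snd (p (Suc i)))"

lemma nonbacktrackingD:
  assumes "nonbacktracking n p" "i < n"
  shows "snd (p i) = fst (p (Suc i))" "fst (p i) \<noteq> snd (p (Suc i))"
  using assms by (auto simp: nonbacktracking_def)

lemma nonbacktracking_shift:
  "nonbacktracking n p \<Longrightarrow> j + k \<le> n \<Longrightarrow> nonbacktracking k (\<lambda>i. p (j + i))"
  unfolding nonbacktracking_def by simp

lemma nonbacktracking_if_walk_amplitude_nonzero:
  assumes G: "simple_graph V E"
    and no_backscatter: "\<forall>v\<in>V. \<forall>w\<in>nbrs V E v. \<sigma> v w w = 0"
    and p: "p \<in> walks (dbonds V E) n b c" and amp: "walk_amplitude \<sigma> n p \<noteq> 0"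
  shows "nonbacktracking n p"
  unfolding nonbacktracking_def
proof (intro allI impI conjI)
  fix i assume i: "i < n"
  have nz: "Smat \<sigma> (p i) (p (Suc i)) \<noteq> 0"
    using amp i by (auto simp: walk_amplitude_def)
  then show step: "snd (p i) = fst (p (Suc i))"
    by (auto simp: Smat_def split: if_splits)
  have "snd (p i) \<in> V" "fst (p i) \<in> nbrs V E (snd (p i))"
    using walks_in_carrier[OF p, of i] i G by (auto simp: mem_dbonds nbrs_def simple_graph_def)
  then have "\<sigma> (snd (p i)) (fst (p i)) (fst (p i)) = 0"
    using no_backscatter by auto
  then show "fst (p i) \<noteq> snd (p (Suc i))"
    using nz step by (auto simp: Smat_def)
qed

primrec nonbacktracking_reach :: "('v \<times> 'v) set \<Rightarrow> 'v \<times> 'v \<Rightarrow> nat \<Rightarrow> ('v \<times> 'v) set" where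
  "nonbacktracking_reach D e 0 = {e}"
| "nonbacktracking_reach D e (Suc n) = {c \<in> D. \<exists>c'\<in>nonbacktracking_reach D e n. snd c' = fst c \<and> fst c' \<noteq> snd c}"

lemma nonbacktracking_reach_subset: "e \<in> D \<Longrightarrow> nonbacktracking_reach D e n \<subseteq> D"
  by (cases n) auto

lemma nonbacktracking_endpoint_in_reach:
  "(\<And>i. i \<le> n \<Longrightarrow> p i \<in> D) \<Longrightarrow> nonbacktracking n p \<Longrightarrow> p n \<in> nonbacktracking_reach D (p 0) n"
proof (induction n)
  case (Suc n)
  have "nonbacktracking n p"
    using Suc.prems(2) less_SucI unfolding nonbacktracking_def by blast
  with Suc have "p n \<in> nonbacktracking_reach D (p 0) n"
    by simp
  with Suc.prems show ?case
    by (auto simp: nonbacktracking_def)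
qed simp

lemma card_nonbacktracking_reach_le:
  assumes G: "simple_graph V E" and R: "regular V E d" and e: "e \<in> dbonds V E"
  shows "card (nonbacktracking_reach (dbonds V E) e n) \<le> (d - 1) ^ n"
proof (induction n)
  case 0
  then show ?case by simp
next
  case (Suc n)
  define D where "D = dbonds V E"
  define succ where "succ c' = {c \<in> D. snd c' = fst c \<and> fst c' \<noteq> snd c}" for c'
  have succ_card: "card (succ c') \<le> d - 1" if "c' \<in> D" for c'
  proof -
    have nbrs: "snd c' \<in> V" "fst c' \<in> nbrs V E (snd c')" "finite (nbrs V E (snd c'))"
      using that G by (auto simp: D_def mem_dbonds nbrs_def simple_graph_def)
    have "succ c' \<subseteq> Pair (snd c') ` (nbrs V E (snd c') - {fst c'})"
      by (auto simp: succ_def D_def mem_dbonds nbrs_def)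
    then have "card (succ c') \<le> card (nbrs V E (snd c') - {fst c'})"
      using nbrs by (meson card_image_le card_mono finite_Diff finite_imageI order_trans)
    also have "\<dots> = d - 1"
      using nbrs R by (simp add: regular_def)
    finally show ?thesis .
  qed
  have fin: "finite (nonbacktracking_reach D e n)"
    using nonbacktracking_reach_subset[of e D n] e finite_dbonds[OF G] by (auto simp: D_def intro: finite_subset)
  have "nonbacktracking_reach D e (Suc n) = (\<Union>c'\<in>nonbacktracking_reach D e n. succ c')"
    by (auto simp: succ_def)
  then have "card (nonbacktracking_reach D e (Suc n)) \<le> (\<Sum>c'\<in>nonbacktracking_reach D e n. card (succ c'))"
    using card_UN_le[OF fin] by simp
  also have "\<dots> \<le> (\<Sum>c'\<in>nonbacktracking_reach D e n. d - 1)"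
    using nonbacktracking_reach_subset[of e D n] e by (intro sum_mono succ_card) (auto simp: D_def)
  also have "\<dots> = card (nonbacktracking_reach D e n) * (d - 1)"
    by simp
  also have "\<dots> \<le> (d - 1) ^ Suc n"
    using Suc.IH by (simp add: D_def mult.commute)
  finally show ?case
    by (simp add: D_def)
qed

lemma cycle_edge_in_cycle_bonds:
  assumes "is_cycle V E l y" "l \<le> t" "i < l"
  shows "{y i, y (Suc i)} \<in> cycle_bonds V E t"
proof -
  have "E (y i) (y (Suc i))"
    using assms by (simp add: is_cycle_def)
  then show ?thesis
    unfolding cycle_bonds_def using assms by blast
qed

lemma cycle_bonds_mono: "t \<le> t' \<Longrightarrow> cycle_bonds V E t \<subseteq> cycle_bonds V E t'"
  unfolding cycle_bonds_def by (blast intro: order_trans)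

lemma finite_cycle_bonds:
  assumes "simple_graph V E"
  shows "finite (cycle_bonds V E t)"
proof -
  have "cycle_bonds V E t \<subseteq> (\<lambda>(u, w). {u, w}) ` (V \<times> V)"
    using assms by (auto simp: cycle_bonds_def simple_graph_def)
  then show ?thesis
    by (rule finite_subset) (use assms in \<open>auto simp: simple_graph_def\<close>)
qed

lemma closed_walk_is_cycle:
  assumes "2 \<le> l" "y l = y 0" "\<And>i. i \<le> l \<Longrightarrow> y i \<in> V" "\<And>i. i < l \<Longrightarrow> E (y i) (y (Suc i))"
    and no_backtrack: "\<And>i. i + 2 \<le> l \<Longrightarrow> y (i + 2) \<noteq> y i"
    and no_backtrack_at_closure: "y 1 \<noteq> y (l - 1)"
  shows "is_cycle V E l y"
proof -
  have no_backtrack_mod: "y ((i + 2) mod l) \<noteq> y i" if i: "i < l" for i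
  proof -
    consider "i + 2 < l" | "i + 2 = l" | "i + 1 = l"
      using i by linarith
    then show ?thesis
    proof cases
      case 1
      then show ?thesis using no_backtrack by simp
    next
      case 2
      then show ?thesis using no_backtrack[of i] assms(2) by simp
    next
      case 3
      then have "i = l - 1" "(i + 2) mod l = 1"
        using assms(1) by (simp_all add: mod_Suc)
      then show ?thesis
        using no_backtrack_at_closure by simp
    qed
  qed
  have "y ((i + 2) mod l) \<noteq> y (i mod l)" for i
  proof -
    have "i mod l < l"
      using assms(1) by simp
    from no_backtrack_mod[OF this] show ?thesis
      unfolding mod_add_left_eq .
  qed
  then show ?thesis
    unfolding is_cycle_def using assms by auto
qed

definition join_walks :: "nat \<Rightarrow> (nat \<Rightarrow> 'v \<times> 'v) \<Rightarrow> (nat \<Rightarrow> 'v \<times> 'v) \<Rightarrow> nat \<Rightarrow> 'v" where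
  "join_walks m P Q i = (if i \<le> m then snd (P i) else snd (Q (2 * m - i)))"

lemma join_walks_low: "i \<le> m \<Longrightarrow> join_walks m P Q i = snd (P i)"
  by (simp add: join_walks_def)

lemma join_walks_high:
  "m \<le> i \<Longrightarrow> snd (P m) = snd (Q m) \<Longrightarrow> join_walks m P Q i = snd (Q (2 * m - i))"
  by (cases "i = m") (auto simp: join_walks_def)

lemma join_walks_closed_walk:
  assumes G: "simple_graph V E"
    and bonds: "\<And>i. i \<le> m \<Longrightarrow> P i \<in> dbonds V E \<and> Q i \<in> dbonds V E"
    and nbP: "nonbacktracking m P" and nbQ: "nonbacktracking m Q"
    and start: "P 0 = Q 0" and meet: "snd (P m) = snd (Q m)"
  shows "join_walks m P Q (2 * m) = join_walks m P Q 0"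
    and "\<And>i. i \<le> 2 * m \<Longrightarrow> join_walks m P Q i \<in> V"
    and "\<And>i. i < 2 * m \<Longrightarrow> E (join_walks m P Q i) (join_walks m P Q (Suc i))"
proof -
  let ?y = "join_walks m P Q"
  note low = join_walks_low[of _ m P Q] and high = join_walks_high[of m _ P Q, OF _ meet]
  show "?y (2 * m) = ?y 0"
    using low[of 0] high[of "2 * m"] start by simp
  show "?y i \<in> V" if "i \<le> 2 * m" for i
    using that bonds[of i] bonds[of "2 * m - i"] low[of i] high[of i]
    by (cases "i \<le> m") (auto simp: mem_dbonds)
  show "E (?y i) (?y (Suc i))" if "i < 2 * m" for i
  proof (cases "i < m")
    case True
    then show ?thesis
      using bonds[of "Suc i"] low[of i] low[of "Suc i"] nonbacktrackingD(1)[OF nbP, of i]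
      by (simp add: mem_dbonds)
  next
    case False
    then have "?y i = snd (Q (Suc (2 * m - Suc i)))" "?y (Suc i) = fst (Q (Suc (2 * m - Suc i)))"
      using that high[of i] high[of "Suc i"]
        nonbacktrackingD(1)[OF nbQ, of "2 * m - Suc i"]
      by (simp_all add: Suc_diff_Suc)
    moreover have "Q (Suc (2 * m - Suc i)) \<in> dbonds V E"
      using bonds False that by simp
    ultimately show ?thesis
      using G by (auto simp: mem_dbonds simple_graph_def)
  qed
qed

lemma join_walks_no_backtrack:
  assumes nbP: "nonbacktracking m P" and nbQ: "nonbacktracking m Q" and "2 \<le> m"
    and apart_first: "snd (P 1) \<noteq> snd (Q 1)" and apart_last: "fst (P m) \<noteq> fst (Q m)"
    and meet: "snd (P m) = snd (Q m)"
  shows "\<And>i. i + 2 \<le> 2 * m \<Longrightarrow> join_walks m P Q (i + 2) \<noteq> join_walks m P Q i"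
    and "join_walks m P Q 1 \<noteq> join_walks m P Q (2 * m - 1)"
proof -
  let ?y = "join_walks m P Q"
  note low = join_walks_low[of _ m P Q] and high = join_walks_high[of m _ P Q, OF _ meet]
  show "?y (i + 2) \<noteq> ?y i" if "i + 2 \<le> 2 * m" for i
  proof -
    consider "i + 2 \<le> m" | "m = Suc i" | "m \<le> i"
      by linarith
    then show ?thesis
    proof cases
      case 1
      then show ?thesis
        using low[of i] low[of "i + 2"] nonbacktrackingD[OF nbP, of "Suc i"] nonbacktrackingD(1)[OF nbP, of i]
        by simp
    next
      case 2
      then have "?y (i + 2) = fst (Q m)" "?y i = fst (P m)"
        using high[of "i + 2"] low[of i] nonbacktrackingD(1)[OF nbQ, of i] nonbacktrackingD(1)[OF nbP, of i]
        by simp_all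
      then show ?thesis
        using apart_last by simp
    next
      case 3
      define s where "s = 2 * m - (i + 2)"
      have "?y (i + 2) = snd (Q s)" "?y i = snd (Q (Suc (Suc s)))" "Suc s < m"
        using 3 that \<open>2 \<le> m\<close> high[of "i + 2"] high[of i] by (auto simp: s_def numeral_2_eq_2 Suc_diff_Suc)
      then show ?thesis
        using nonbacktrackingD[OF nbQ, of "Suc s"] nonbacktrackingD(1)[OF nbQ, of s] by simp
    qed
  qed
  show "?y 1 \<noteq> ?y (2 * m - 1)"
    using low[of 1] high[of "2 * m - 1"] \<open>2 \<le> m\<close> apart_first by simp
qed

lemma diverging_nonbacktracking_walks_close_cycle:
  assumes G: "simple_graph V E"
    and bonds: "\<And>i. i \<le> m \<Longrightarrow> P i \<in> dbonds V E \<and> Q i \<in> dbonds V E"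
    and nbP: "nonbacktracking m P" and nbQ: "nonbacktracking m Q" and "0 < m"
    and start: "P 0 = Q 0" and apart: "\<And>i. 0 < i \<Longrightarrow> i \<le> m \<Longrightarrow> P i \<noteq> Q i"
    and meet: "snd (P m) = snd (Q m)"
  shows "2 \<le> m \<and> {fst (P m), snd (P m)} \<in> cycle_bonds V E (2 * m)
           \<and> {fst (Q m), snd (Q m)} \<in> cycle_bonds V E (2 * m)"
proof -
  let ?y = "join_walks m P Q"
  note low = join_walks_low[of _ m P Q] and high = join_walks_high[of m _ P Q, OF _ meet]
  have apart_first: "snd (P 1) \<noteq> snd (Q 1)"
    using apart[of 1] nonbacktrackingD(1)[OF nbP, of 0] nonbacktrackingD(1)[OF nbQ, of 0] start \<open>0 < m\<close>
    by (auto simp: prod_eq_iff)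
  have apart_last: "fst (P m) \<noteq> fst (Q m)"
    using apart[of m] meet \<open>0 < m\<close> by (auto simp: prod_eq_iff)
  have "2 \<le> m"
    using apart_first meet \<open>0 < m\<close> by (cases "m = 1") auto
  then have cycle: "is_cycle V E (2 * m) ?y"
    using join_walks_closed_walk[OF assms(1-4) start meet]
      join_walks_no_backtrack[OF nbP nbQ _ apart_first apart_last meet]
    by (intro closed_walk_is_cycle) auto
  have "{?y (m - 1), ?y (Suc (m - 1))} = {fst (P m), snd (P m)}"
    using low[of "m - 1"] low[of m] nonbacktrackingD(1)[OF nbP, of "m - 1"] \<open>2 \<le> m\<close>
    by simp
  moreover have "{?y m, ?y (Suc m)} = {fst (Q m), snd (Q m)}"
    using high[of m] high[of "Suc m"]
      nonbacktrackingD(1)[OF nbQ, of "m - 1"] \<open>2 \<le> m\<close>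
    by (auto simp: Suc_diff_Suc)
  moreover have "m - 1 < 2 * m" "m < 2 * m"
    using \<open>2 \<le> m\<close> by simp_all
  ultimately show ?thesis
    using \<open>2 \<le> m\<close> cycle_edge_in_cycle_bonds[OF cycle order_refl] by metis
qed

lemma last_divergence:
  fixes p q :: "nat \<Rightarrow> 'a"
  assumes ends: "p 0 = q 0" "p t = q t" and "i0 \<le> t" "p i0 \<noteq> q i0"
  obtains r j where "r < j" "j < t" "p r = q r" "p (Suc j) = q (Suc j)"
    "\<And>i. r < i \<Longrightarrow> i \<le> j \<Longrightarrow> p i \<noteq> q i"
proof -
  define J where "J = {i. i \<le> t \<and> p i \<noteq> q i}"
  define j where "j = Max J"
  have "finite J" "i0 \<in> J"
    using assms by (auto simp: J_def)
  then have "j \<in> J" and j_max: "\<And>i. i \<in> J \<Longrightarrow> i \<le> j"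
    unfolding j_def using Max_in Max_ge by blast+
  then have "p j \<noteq> q j" "j \<le> t"
    by (auto simp: J_def)
  then have "j < t" "0 < j"
    using ends by (auto simp: le_less intro: Nat.gr0I)
  have after: "p (Suc j) = q (Suc j)"
    using j_max[of "Suc j"] \<open>j < t\<close> by (auto simp: J_def)
  define R where "R = {i. i < j \<and> p i = q i}"
  define r where "r = Max R"
  have "finite R" "0 \<in> R"
    using \<open>0 < j\<close> ends by (auto simp: R_def)
  then have "r \<in> R" and r_max: "\<And>i. i \<in> R \<Longrightarrow> i \<le> r"
    unfolding r_def using Max_in Max_ge by blast+
  then have "r < j" "p r = q r"
    by (auto simp: R_def)
  moreover have "p i \<noteq> q i" if "r < i" "i \<le> j" for i
    using r_max[of i] that \<open>p j \<noteq> q j\<close> by (cases "i = j") (auto simp: R_def)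
  ultimately show ?thesis
    using that \<open>j < t\<close> after by blast
qed

lemma distinct_nonbacktracking_walks_diverge_on_cycles:
  assumes G: "simple_graph V E"
    and p: "p \<in> walks (dbonds V E) t b c" and q: "q \<in> walks (dbonds V E) t b c" and "p \<noteq> q"
    and nbp: "nonbacktracking t p" and nbq: "nonbacktracking t q"
  obtains j where "2 \<le> j" "j < t" "p j \<noteq> q j"
    "{fst (p j), snd (p j)} \<in> cycle_bonds V E (2 * t)" "{fst (q j), snd (q j)} \<in> cycle_bonds V E (2 * t)"
    "c \<in> nonbacktracking_reach (dbonds V E) (p j) (t - j)" "c \<in> nonbacktracking_reach (dbonds V E) (q j) (t - j)"
proof -
  have ends: "p 0 = b" "p t = c" "q 0 = b" "q t = c"
    using p q by (auto simp: walks_def)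
  have "p i = q i" if "t < i" for i
    using p q that by (auto simp: walks_def PiE_def extensional_def)
  then obtain i0 where "i0 \<le> t" "p i0 \<noteq> q i0"
    using \<open>p \<noteq> q\<close> by (meson ext not_le)
  moreover have "p 0 = q 0" "p t = q t"
    using ends by simp_all
  ultimately obtain r j where "r < j" "j < t" "p r = q r" "p (Suc j) = q (Suc j)"
    and apart: "\<And>i. r < i \<Longrightarrow> i \<le> j \<Longrightarrow> p i \<noteq> q i"
    using last_divergence by blast
  have meet: "snd (p j) = snd (q j)"
    using nonbacktrackingD(1)[OF nbp \<open>j < t\<close>] nonbacktrackingD(1)[OF nbq \<open>j < t\<close>] \<open>p (Suc j) = q (Suc j)\<close>
    by simp
  define m where "m = j - r"
  have "2 \<le> m \<and> {fst (p (r + m)), snd (p (r + m))} \<in> cycle_bonds V E (2 * m)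
          \<and> {fst (q (r + m)), snd (q (r + m))} \<in> cycle_bonds V E (2 * m)"
  proof (rule diverging_nonbacktracking_walks_close_cycle[OF G, where P = "\<lambda>i. p (r + i)" and Q = "\<lambda>i. q (r + i)"])
    show "p (r + i) \<in> dbonds V E \<and> q (r + i) \<in> dbonds V E" if "i \<le> m" for i
      using that walks_in_carrier[OF p] walks_in_carrier[OF q] \<open>r < j\<close> \<open>j < t\<close> by (simp add: m_def)
    show "nonbacktracking m (\<lambda>i. p (r + i))" "nonbacktracking m (\<lambda>i. q (r + i))"
      using nbp nbq \<open>r < j\<close> \<open>j < t\<close> by (auto intro!: nonbacktracking_shift simp: m_def)
  qed (use \<open>r < j\<close> \<open>p r = q r\<close> apart meet in \<open>auto simp: m_def\<close>)
  moreover have "cycle_bonds V E (2 * m) \<subseteq> cycle_bonds V E (2 * t)"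
    using \<open>j < t\<close> by (intro cycle_bonds_mono) (simp add: m_def)
  moreover have "c \<in> nonbacktracking_reach (dbonds V E) (p j) (t - j)" "c \<in> nonbacktracking_reach (dbonds V E) (q j) (t - j)"
    using nonbacktracking_endpoint_in_reach[of "t - j" "\<lambda>i. p (j + i)" "dbonds V E"]
      nonbacktracking_endpoint_in_reach[of "t - j" "\<lambda>i. q (j + i)" "dbonds V E"]
      walks_in_carrier[OF p] walks_in_carrier[OF q] nonbacktracking_shift[OF nbp] nonbacktracking_shift[OF nbq]
      ends \<open>j < t\<close> by auto
  ultimately show ?thesis
    using \<open>r < j\<close> \<open>j < t\<close> apart[of j]
    by (intro that[of j]) (auto simp: m_def subset_iff)
qed

section \<open>Counting the deviating columns\<close>

definition interfering_bonds :: "('v \<times> 'v) set \<Rightarrow> ('v \<Rightarrow> 'v \<Rightarrow> 'v \<Rightarrow> complex) \<Rightarrow> nat \<Rightarrow> ('v \<times> 'v) set" where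
  "interfering_bonds D \<sigma> t = {c \<in> D. \<exists>b\<in>D. \<exists>p\<in>walks D t b c. \<exists>q\<in>walks D t b c.
     p \<noteq> q \<and> walk_amplitude \<sigma> t p \<noteq> 0 \<and> walk_amplitude \<sigma> t q \<noteq> 0}"

lemma column_deviation_le:
  assumes "finite D" "orthonormal_columns D (Smat \<sigma>)" "c \<in> D"
  shows "(\<Sum>b\<in>D. \<bar>Mtilde D L \<sigma> t b c - mat_pow D (Mmat \<sigma>) t b c\<bar>)
           \<le> (if c \<in> interfering_bonds D \<sigma> t then 2 else 0)"
proof (cases "c \<in> interfering_bonds D \<sigma> t")
  case False
  then have "Mtilde D L \<sigma> t b c = mat_pow D (Mmat \<sigma>) t b c" if "b \<in> D" for b
    using assms that
    by (intro Mtilde_eq_mat_pow_Mmat_if_unique_walk) (auto simp: interfering_bonds_def)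
  then show ?thesis
    using False by simp
next
  case True
  have "(\<Sum>b\<in>D. \<bar>Mtilde D L \<sigma> t b c - mat_pow D (Mmat \<sigma>) t b c\<bar>)
      \<le> (\<Sum>b\<in>D. Mtilde D L \<sigma> t b c + mat_pow D (Mmat \<sigma>) t b c)"
    using Mtilde_nonneg[OF assms(1) _ assms(3)] mat_pow_nonneg[of "Mmat \<sigma>"]
    by (intro sum_mono) (simp add: Mmat_def abs_le_iff)
  also have "\<dots> = 2"
    using Mtilde_column_sum[OF assms] mat_pow_column_sum_one[of D "Mmat \<sigma>" c t]
      orthonormal_columns_sum_norm_square[OF assms(2)] assms
    by (simp add: sum.distrib Mmat_def)
  finally show ?thesis
    using True by simp
qed

lemma total_deviation_le:
  assumes "finite D" "orthonormal_columns D (Smat \<sigma>)"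
  shows "(\<Sum>b\<in>D. \<Sum>c\<in>D. \<bar>Mtilde D L \<sigma> t b c - mat_pow D (Mmat \<sigma>) t b c\<bar>)
           \<le> 2 * real (card (interfering_bonds D \<sigma> t))"
proof -
  have "(\<Sum>b\<in>D. \<Sum>c\<in>D. \<bar>Mtilde D L \<sigma> t b c - mat_pow D (Mmat \<sigma>) t b c\<bar>)
      \<le> (\<Sum>c\<in>D. if c \<in> interfering_bonds D \<sigma> t then 2 else 0)"
    using assms by (subst sum.swap) (intro sum_mono column_deviation_le)
  also have "\<dots> = 2 * real (card (interfering_bonds D \<sigma> t))"
    using assms(1) by (simp add: sum.If_cases interfering_bonds_def Int_def)
  finally show ?thesis .
qed

lemma bond_inner_diff:
  "bond_inner D x A y - bond_inner D x B y = bond_inner D x (\<lambda>b c. A b c - B b c) y"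
  unfolding bond_inner_def sum_subtractf[symmetric]
  by (intro sum.cong refl) (simp add: sum_subtractf right_diff_distrib left_diff_distrib)

lemma norm_bond_inner_of_real_le:
  assumes "0 \<le> \<kappa>" "\<forall>b\<in>D. cmod (f b) \<le> \<kappa>"
  shows "cmod (bond_inner D f (\<lambda>b c. complex_of_real (A b c)) f) \<le> \<kappa>\<^sup>2 * (\<Sum>b\<in>D. \<Sum>c\<in>D. \<bar>A b c\<bar>)"
proof -
  have "cmod (bond_inner D f (\<lambda>b c. complex_of_real (A b c)) f)
      \<le> (\<Sum>b\<in>D. cmod (f b) * (\<Sum>c\<in>D. \<bar>A b c\<bar> * cmod (f c)))"
    unfolding bond_inner_def
    by (rule order_trans[OF norm_sum sum_mono])
      (auto simp: norm_mult intro!: mult_left_mono order_trans[OF norm_sum] sum_mono)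
  also have "\<dots> \<le> (\<Sum>b\<in>D. \<kappa> * (\<Sum>c\<in>D. \<bar>A b c\<bar> * \<kappa>))"
  proof (rule sum_mono)
    fix b assume "b \<in> D"
    have "(\<Sum>c\<in>D. \<bar>A b c\<bar> * cmod (f c)) \<le> (\<Sum>c\<in>D. \<bar>A b c\<bar> * \<kappa>)"
      using assms(2) by (intro sum_mono mult_left_mono) auto
    then show "cmod (f b) * (\<Sum>c\<in>D. \<bar>A b c\<bar> * cmod (f c)) \<le> \<kappa> * (\<Sum>c\<in>D. \<bar>A b c\<bar> * \<kappa>)"
      using assms \<open>b \<in> D\<close> by (intro mult_mono) (auto intro: sum_nonneg)
  qed
  finally show ?thesis
    by (simp add: sum_distrib_left sum_distrib_right power2_eq_square mult_ac)
qed

lemma card_dbonds_over_le: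
  assumes "finite C"
  shows "card {e \<in> D. {fst e, snd e} \<in> C} \<le> 2 * card C"
proof -
  have fiber: "finite {e. {fst e, snd e} = S} \<and> card {e. {fst e, snd e} = S} \<le> 2" for S :: "'a set"
  proof (cases "\<exists>e. {fst e, snd e} = S")
    case True
    then obtain e where "{fst e, snd e} = S"
      by blast
    then have "{e. {fst e, snd e} = S} \<subseteq> {e, (snd e, fst e)}"
      by (auto simp: doubleton_eq_iff prod_eq_iff)
    moreover have "card {e, (snd e, fst e)} \<le> 2"
      by (simp add: card_insert_if)
    ultimately show ?thesis
      by (meson card_mono finite.emptyI finite.insertI finite_subset order_trans)
  qed simp
  have "card {e \<in> D. {fst e, snd e} \<in> C} \<le> card (\<Union>S\<in>C. {e. {fst e, snd e} = S})"
    using assms fiber by (intro card_mono) auto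
  also have "\<dots> \<le> (\<Sum>S\<in>C. card {e. {fst e, snd e} = S})"
    by (rule card_UN_le[OF assms])
  also have "\<dots> \<le> 2 * card C"
    using fiber sum_mono[of C "\<lambda>S. card {e. {fst e, snd e} = S}" "\<lambda>_. 2"] by simp
  finally show ?thesis .
qed

lemma interfering_bond_reached_from_two_cycle_dbonds:
  assumes G: "simple_graph V E"
    and no_backscatter: "\<forall>v\<in>V. \<forall>w\<in>nbrs V E v. \<sigma> v w w = 0"
    and "c \<in> interfering_bonds (dbonds V E) \<sigma> t"
  obtains i e e' where "i \<in> {1..<t - 1}" "e \<noteq> e'"
    "{e, e'} \<subseteq> {e \<in> dbonds V E. {fst e, snd e} \<in> cycle_bonds V E (2 * t)}"
    "c \<in> nonbacktracking_reach (dbonds V E) e i" "c \<in> nonbacktracking_reach (dbonds V E) e' i"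
proof -
  obtain b p q where p: "p \<in> walks (dbonds V E) t b c" and q: "q \<in> walks (dbonds V E) t b c"
    and "p \<noteq> q" "walk_amplitude \<sigma> t p \<noteq> 0" "walk_amplitude \<sigma> t q \<noteq> 0"
    using assms(3) by (auto simp: interfering_bonds_def)
  then have "nonbacktracking t p" "nonbacktracking t q"
    using nonbacktracking_if_walk_amplitude_nonzero[where \<sigma> = \<sigma>, OF G no_backscatter] by blast+
  from distinct_nonbacktracking_walks_diverge_on_cycles[OF G p q \<open>p \<noteq> q\<close> this]
  obtain j where "2 \<le> j" "j < t" "p j \<noteq> q j"
    "{fst (p j), snd (p j)} \<in> cycle_bonds V E (2 * t)" "{fst (q j), snd (q j)} \<in> cycle_bonds V E (2 * t)"
    "c \<in> nonbacktracking_reach (dbonds V E) (p j) (t - j)" "c \<in> nonbacktracking_reach (dbonds V E) (q j) (t - j)" .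
  moreover have "t - j \<in> {1..<t - 1}"
    using \<open>2 \<le> j\<close> \<open>j < t\<close> by auto
  moreover have "p j \<in> dbonds V E" "q j \<in> dbonds V E"
    using walks_in_carrier[OF p] walks_in_carrier[OF q] \<open>j < t\<close> by auto
  ultimately show ?thesis
    using that by auto
qed

lemma double_counting_le:
  assumes "finite I" "finite Dc"
    and twice: "\<And>c. c \<in> I \<Longrightarrow> 2 \<le> (\<Sum>i\<in>A. card {e \<in> Dc. c \<in> R e i})"
    and few: "\<And>e i. e \<in> Dc \<Longrightarrow> i \<in> A \<Longrightarrow> card {c \<in> I. c \<in> R e i} \<le> g i"
  shows "2 * card I \<le> card Dc * (\<Sum>i\<in>A. g i)"
proof -
  have "2 * card I \<le> (\<Sum>c\<in>I. \<Sum>i\<in>A. card {e \<in> Dc. c \<in> R e i})"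
    using twice sum_mono[of I "\<lambda>_. 2::nat"] by (simp add: mult.commute)
  also have "\<dots> = (\<Sum>c\<in>I. \<Sum>i\<in>A. \<Sum>e\<in>Dc. if c \<in> R e i then 1 else 0)"
    using assms(2) by (simp add: sum.inter_filter[symmetric])
  also have "\<dots> = (\<Sum>i\<in>A. \<Sum>e\<in>Dc. \<Sum>c\<in>I. if c \<in> R e i then 1 else 0)"
    by (rule trans[OF sum.swap sum.cong[OF refl sum.swap]])
  also have "\<dots> = (\<Sum>i\<in>A. \<Sum>e\<in>Dc. card {c \<in> I. c \<in> R e i})"
    using assms(1) by (simp add: sum.inter_filter[symmetric])
  also have "\<dots> \<le> (\<Sum>i\<in>A. \<Sum>e\<in>Dc. g i)"
    using few by (intro sum_mono) auto
  also have "\<dots> = card Dc * (\<Sum>i\<in>A. g i)"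
    by (simp add: sum_distrib_left mult.commute)
  finally show ?thesis .
qed

lemma card_interfering_bonds_le:
  assumes G: "simple_graph V E" and R: "regular V E d"
    and no_backscatter: "\<forall>v\<in>V. \<forall>w\<in>nbrs V E v. \<sigma> v w w = 0" and "t \<le> T"
  shows "card (interfering_bonds (dbonds V E) \<sigma> t)
           \<le> card (cycle_bonds V E (2 * T)) * (\<Sum>i\<in>{1..<t - 1}. (d - 1) ^ i)"
proof -
  define Dc where "Dc = {e \<in> dbonds V E. {fst e, snd e} \<in> cycle_bonds V E (2 * T)}"
  have fin: "finite (interfering_bonds (dbonds V E) \<sigma> t)" "finite Dc"
    using finite_dbonds[OF G] by (auto simp: Dc_def interfering_bonds_def)
  have "2 * card (interfering_bonds (dbonds V E) \<sigma> t) \<le> card Dc * (\<Sum>i\<in>{1..<t - 1}. (d - 1) ^ i)"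
  proof (rule double_counting_le[OF fin])
    fix c assume "c \<in> interfering_bonds (dbonds V E) \<sigma> t"
    from interfering_bond_reached_from_two_cycle_dbonds[OF G no_backscatter this]
    obtain i e e' where "i \<in> {1..<t - 1}" "e \<noteq> e'"
      and "{e, e'} \<subseteq> {e \<in> dbonds V E. {fst e, snd e} \<in> cycle_bonds V E (2 * t)}"
      and "c \<in> nonbacktracking_reach (dbonds V E) e i" "c \<in> nonbacktracking_reach (dbonds V E) e' i" .
    moreover have "cycle_bonds V E (2 * t) \<subseteq> cycle_bonds V E (2 * T)"
      using \<open>t \<le> T\<close> by (simp add: cycle_bonds_mono)
    ultimately have "{e, e'} \<subseteq> {e \<in> Dc. c \<in> nonbacktracking_reach (dbonds V E) e i}"
      by (auto simp: Dc_def)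
    then have "2 \<le> card {e \<in> Dc. c \<in> nonbacktracking_reach (dbonds V E) e i}"
      using card_mono[of "{e \<in> Dc. c \<in> nonbacktracking_reach (dbonds V E) e i}" "{e, e'}"] fin(2) \<open>e \<noteq> e'\<close>
      by simp
    also have "\<dots> \<le> (\<Sum>i\<in>{1..<t - 1}. card {e \<in> Dc. c \<in> nonbacktracking_reach (dbonds V E) e i})"
      using \<open>i \<in> {1..<t - 1}\<close> by (intro member_le_sum) auto
    finally show "2 \<le> (\<Sum>i\<in>{1..<t - 1}. card {e \<in> Dc. c \<in> nonbacktracking_reach (dbonds V E) e i})" .
  next
    fix e i assume "e \<in> Dc"
    then have "e \<in> dbonds V E"
      by (simp add: Dc_def)
    then have "card {c \<in> interfering_bonds (dbonds V E) \<sigma> t. c \<in> nonbacktracking_reach (dbonds V E) e i}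
        \<le> card (nonbacktracking_reach (dbonds V E) e i)"
      using nonbacktracking_reach_subset[of e "dbonds V E" i] finite_dbonds[OF G]
      by (intro card_mono) (auto intro: finite_subset)
    also have "\<dots> \<le> (d - 1) ^ i"
      using card_nonbacktracking_reach_le[OF G R \<open>e \<in> dbonds V E\<close>] .
    finally show "card {c \<in> interfering_bonds (dbonds V E) \<sigma> t. c \<in> nonbacktracking_reach (dbonds V E) e i}
        \<le> (d - 1) ^ i" .
  qed
  also have "\<dots> \<le> 2 * card (cycle_bonds V E (2 * T)) * (\<Sum>i\<in>{1..<t - 1}. (d - 1) ^ i)"
    using card_dbonds_over_le[OF finite_cycle_bonds[OF G]] by (simp add: Dc_def)
  finally show ?thesis
    by simp
qed

lemma geometric_sum_from_1_le:
  fixes x :: real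
  assumes "0 \<le> x"
  shows "(x - 1) * (\<Sum>i\<in>{1..<m}. x ^ i) \<le> x ^ m"
proof (induction m)
  case (Suc m)
  show ?case
  proof (cases "m = 0")
    case False
    then have "(x - 1) * (\<Sum>i\<in>{1..<Suc m}. x ^ i) = (x - 1) * (\<Sum>i\<in>{1..<m}. x ^ i) + (x - 1) * x ^ m"
      by (simp add: distrib_left)
    also have "\<dots> \<le> x ^ Suc m"
      using Suc.IH by (simp add: algebra_simps)
    finally show ?thesis .
  qed (use assms in simp)
qed simp

lemma sum_power_le_geometric:
  fixes x :: real
  assumes "1 < x" "1 \<le> t"
  shows "(\<Sum>i\<in>{1..<t - 1}. x ^ i) \<le> x ^ t / ((x - 1) * x)"
proof -
  have "(\<Sum>i\<in>{1..<t - 1}. x ^ i) * ((x - 1) * x) \<le> x ^ (t - 1) * x"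
    using geometric_sum_from_1_le[of x "t - 1"] mult_right_mono[of _ _ x] assms by (simp add: mult_ac)
  also have "\<dots> = x ^ t"
    using assms(2) by (cases t) (simp_all add: mult.commute)
  finally show ?thesis
    using assms(1) by (simp add: pos_le_divide_eq)
qed

theorem proposition3:
  fixes V :: "'v set" and E :: "'v \<Rightarrow> 'v \<Rightarrow> bool" and d :: nat
    and L :: "'v \<times> 'v \<Rightarrow> real" and \<sigma> :: "'v \<Rightarrow> 'v \<Rightarrow> 'v \<Rightarrow> complex"
    and T :: nat and \<kappa> :: real and f :: "'v \<times> 'v \<Rightarrow> complex" and t :: nat
  assumes "simple_graph V E" and "regular V E d" and "d \<ge> 3"
    and "bond_lengths V E L"
    and "\<forall>v\<in>V. unitary_on (nbrs V E v) (\<sigma> v)"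
    and "\<forall>v\<in>V. \<forall>w\<in>nbrs V E v. \<sigma> v w w = 0"
    and "T > 0" and "\<kappa> > 0"
    and "\<forall>b\<in>dbonds V E. cmod (f b) \<le> \<kappa>"
    and "1 \<le> t" and "t \<le> T"
  shows "cmod (bond_inner (dbonds V E) f (\<lambda>b c. complex_of_real (Mtilde (dbonds V E) L \<sigma> t b c)) f
              - bond_inner (dbonds V E) f (\<lambda>b c. complex_of_real (mat_pow (dbonds V E) (Mmat \<sigma>) t b c)) f)
         \<le> 2 * \<kappa>\<^sup>2 / ((real d - 2) * (real d - 1)) * (real d - 1) ^ t
             * real (card (cycle_bonds V E (2 * T)))"
proof -
  note G = assms(1) and unitary = assms(5) and no_backscatter = assms(6)
  define D where "D = dbonds V E"
  define x where "x = real d - 1"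
  have "finite D" "orthonormal_columns D (Smat \<sigma>)"
    using finite_dbonds[OF G] orthonormal_columns_Smat[OF G unitary] by (simp_all add: D_def)
  have "card (interfering_bonds D \<sigma> t) \<le> card (cycle_bonds V E (2 * T)) * (\<Sum>i\<in>{1..<t - 1}. (d - 1) ^ i)"
    unfolding D_def using assms(11) by (rule card_interfering_bonds_le[where \<sigma> = \<sigma>, OF G assms(2) no_backscatter])
  then have cycles: "card (interfering_bonds D \<sigma> t) \<le> card (cycle_bonds V E (2 * T)) * (\<Sum>i\<in>{1..<t - 1}. x ^ i)"
    using assms(3) unfolding of_nat_le_iff[symmetric, where 'a = real] by (simp add: x_def of_nat_diff)
  have "cmod (bond_inner D f (\<lambda>b c. complex_of_real (Mtilde D L \<sigma> t b c)) f
              - bond_inner D f (\<lambda>b c. complex_of_real (mat_pow D (Mmat \<sigma>) t b c)) f)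
      \<le> \<kappa>\<^sup>2 * (\<Sum>b\<in>D. \<Sum>c\<in>D. \<bar>Mtilde D L \<sigma> t b c - mat_pow D (Mmat \<sigma>) t b c\<bar>)"
    unfolding bond_inner_diff of_real_diff[symmetric]
    using assms(8,9) by (intro norm_bond_inner_of_real_le) (simp_all add: D_def)
  also have "\<dots> \<le> \<kappa>\<^sup>2 * (2 * card (interfering_bonds D \<sigma> t))"
    using total_deviation_le[OF \<open>finite D\<close> \<open>orthonormal_columns D (Smat \<sigma>)\<close>] by (simp add: mult_left_mono)
  also have "\<dots> \<le> \<kappa>\<^sup>2 * (2 * (card (cycle_bonds V E (2 * T)) * (x ^ t / ((x - 1) * x))))"
    using order_trans[OF cycles mult_left_mono[OF sum_power_le_geometric]] assms(3,10)
    by (intro mult_left_mono) (simp_all add: x_def)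
  finally show ?thesis
    by (simp add: D_def x_def mult_ac)
qed

end
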